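(* Let $\hat H(w)=e^{-w}$ and let $\alpha,\beta\in\mathbb{R}$ with $\alpha<2$, $\alpha-1<\beta<\alpha^2/4$, and $r_1:=\frac{\alpha-\sqrt{\alpha^2-4\beta}}{2}<-1$. Put $s=|\alpha-\sqrt{\alpha^2-4\beta}|=2|r_1|>2$. Then for $\tilde\tau>0$ and $\omega>0$, if $i\omega$ is a root of $\Phi$ then $\tan\omega>0$ and $\tilde\tau=\omega\tan\omega$; and the smallest $\tilde\tau>0$ for which $\Phi$ has a root on the imaginary axis is $$\tilde\tau_0=\omega_0\tan\omega_0=\arcsin\sqrt{\frac{2}{s}}\cdot\sqrt{\frac{2}{s-2}},\qquad \omega_0=\arcsin\sqrt{\frac{2}{s}},$$ at which $i\omega_0$ is a root.
   Context: For a delay-to-time-constant ratio $\tilde\tau>0$ and $\alpha,\beta\in\mathbb{R}$, the rescaled characteristic equation of the linearized coupled Wilson–Cowan system with kernel transform $\hat H$ is $$\Phi(w):=(w+\tilde\tau)^4-\alpha\,\tilde\tau^2(w+\tilde\tau)^2\hat H(w)^2+\beta\,\tilde\tau^4\hat H(w)^4=0,$$ equivalently $Q(w)^2-\alpha Q(w)+\beta=0$ with $Q(w)=\big(\frac{w+\tilde\tau}{\tilde\tau\hat H(w)}\big)^2$. For the Dirac (discrete) delay kernel, $\hat H(w)=e^{-w}$. *)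

theory Defs
  imports "HOL-Analysis.Analysis"
begin

definition Phi :: "(complex \<Rightarrow> complex) \<Rightarrow> real \<Rightarrow> real \<Rightarrow> real \<Rightarrow> complex \<Rightarrow> complex" where
  "Phi H alpha beta tau w =
     (w + of_real tau) ^ 4
     - of_real alpha * of_real tau ^ 2 * (w + of_real tau) ^ 2 * H w ^ 2
     + of_real beta * of_real tau ^ 4 * H w ^ 4"

definition H_dirac :: "complex \<Rightarrow> complex" where
  "H_dirac w = exp (- w)"

end

(*
  Writing r1 \<le> r2 for the roots of Q^2 - alpha Q + beta, the characteristic function factors as
  Phi(w) = e^(-4w) (z^2 - r1 tau^2) (z^2 - r2 tau^2) with z = (w + tau) e^w.  On the imaginary axis
  |z|^2 = tau^2 + omega^2 > r tau^2 for both roots r < 1, so z^2 = r tau^2 forces z to be purely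
  imaginary: tau cos omega = omega sin omega (i.e. tau = omega tan omega) and
  tau^2 + omega^2 = R tau^2 with R = -r.  Then sin^2 omega = 1/R, hence
  |omega| \<ge> arcsin (sqrt (1/R)) and tau = |omega| / sqrt (R - 1); this lower bound decreases in R,
  so the smallest crossing delay comes from R = -r1 = s/2, at omega0 = arcsin (sqrt (2/s)).
*)
theory Submission
  imports Defs
begin

lemma quadratic_roots_below_one:
  fixes a b :: real
  assumes "a - 1 < b" and "b < a^2 / 4" and "(a - sqrt (a^2 - 4 * b)) / 2 < -1"
  defines "r1 \<equiv> (a - sqrt (a^2 - 4 * b)) / 2" and "r2 \<equiv> (a + sqrt (a^2 - 4 * b)) / 2"
  shows "r1 + r2 = a" and "r1 * r2 = b" and "r1 < -1" and "r1 \<le> r2" and "r2 < 1"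
proof -
  show "r1 + r2 = a"
    unfolding r1_def r2_def by (simp add: field_simps)
  have "0 \<le> a^2 - 4 * b"
    using assms(2) by simp
  then have "sqrt (a^2 - 4 * b)^2 = a^2 - 4 * b"
    by simp
  then show "r1 * r2 = b"
    unfolding r1_def r2_def by (simp add: field_simps power2_eq_square)
  show "r1 < -1" and "r1 \<le> r2"
    using assms(3) \<open>0 \<le> a^2 - 4 * b\<close> unfolding r1_def r2_def by auto
  have "(1 - r1) * (1 - r2) = 1 - a + b"
    using \<open>r1 + r2 = a\<close> \<open>r1 * r2 = b\<close> by (simp add: algebra_simps)
  then have "0 < (1 - r1) * (1 - r2)"
    using assms(1) by simp
  then show "r2 < 1"
    using \<open>r1 < -1\<close> by (simp add: zero_less_mult_iff)
qed

lemma Phi_dirac_factor: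
  fixes r1 r2 tau :: real and w :: complex
  assumes "r1 + r2 = alpha" and "r1 * r2 = beta"
  defines "z \<equiv> (w + of_real tau) * exp w"
  shows "Phi H_dirac alpha beta tau w =
    exp (- w) ^ 4 * (z^2 - of_real (r1 * tau^2)) * (z^2 - of_real (r2 * tau^2))"
proof -
  have "w + of_real tau = z * exp (- w)"
    unfolding z_def by (simp add: exp_minus field_simps)
  then show ?thesis
    unfolding Phi_def H_dirac_def assms(1,2)[symmetric]
    by (simp add: algebra_simps power2_eq_square power4_eq_xxxx)
qed

lemma power2_eq_of_real_below_norm_iff:
  fixes z :: complex
  assumes "c < (norm z)^2"
  shows "z^2 = of_real c \<longleftrightarrow> Re z = 0 \<and> c = - ((norm z)^2)"
proof -
  have "z^2 = of_real c \<longleftrightarrow> (Re z)^2 - (Im z)^2 = c \<and> Re z * Im z = 0"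
    by (simp add: complex_eq_iff power2_eq_square) blast
  with assms show ?thesis
    unfolding cmod_power2 by (auto simp: power2_eq_square)
qed

lemma Re_imag_shift_rotation:
  "Re ((\<i> * of_real omega + of_real tau) * exp (\<i> * of_real omega))
     = tau * cos omega - omega * sin omega"
  by (simp add: Re_exp Im_exp)

lemma norm_imag_shift_rotation:
  "(norm ((\<i> * of_real omega + of_real tau) * exp (\<i> * of_real omega)))^2 = tau^2 + omega^2"
proof -
  have "(norm (\<i> * of_real omega + of_real tau))^2 = tau^2 + omega^2"
    by (simp add: cmod_power2)
  then show ?thesis
    by (simp add: norm_mult)
qed

lemma Phi_dirac_imag_root_iff:
  fixes r1 r2 tau omega :: real
  assumes "r1 + r2 = alpha" and "r1 * r2 = beta" and "r1 < 1" and "r2 < 1" and "0 < tau"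
  shows "Phi H_dirac alpha beta tau (\<i> * of_real omega) = 0 \<longleftrightarrow>
    tau * cos omega = omega * sin omega
    \<and> (tau^2 + omega^2 = - r1 * tau^2 \<or> tau^2 + omega^2 = - r2 * tau^2)"
proof -
  define z where "z = (\<i> * of_real omega + of_real tau) * exp (\<i> * of_real omega)"
  have factor_zero_iff: "z^2 - of_real (r * tau^2) = 0 \<longleftrightarrow>
      tau * cos omega = omega * sin omega \<and> tau^2 + omega^2 = - r * tau^2"
    if "r < 1" for r
  proof -
    have "r * tau^2 < tau^2"
      using that \<open>0 < tau\<close> by simp
    then have "r * tau^2 < (norm z)^2"
      unfolding z_def norm_imag_shift_rotation
      by (simp add: less_le_trans[OF _ add_increasing2])
    then show ?thesis
      using power2_eq_of_real_below_norm_iff[of "r * tau^2" z]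
      unfolding z_def Re_imag_shift_rotation norm_imag_shift_rotation by auto
  qed
  show ?thesis
    unfolding Phi_dirac_factor[OF assms(1,2)] z_def[symmetric]
    using factor_zero_iff[OF \<open>r1 < 1\<close>] factor_zero_iff[OF \<open>r2 < 1\<close>] by auto
qed

lemma crossing_delay_eq_tan:
  fixes tau omega :: real
  assumes "0 < tau" and "0 < omega" and crossing: "tau * cos omega = omega * sin omega"
  shows "0 < tan omega \<and> tau = omega * tan omega"
proof -
  have "cos omega \<noteq> 0"
  proof
    assume "cos omega = 0"
    then have "sin omega = 0"
      using crossing assms(1,2) by simp
    with \<open>cos omega = 0\<close> show False
      using sin_cos_squared_add[of omega] by simp
  qed
  then have "tau = omega * tan omega"
    using crossing by (simp add: tan_def field_simps)
  with assms(1,2) show ?thesis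
    by (simp add: zero_less_mult_iff)
qed

lemma crossing_sin_squared:
  fixes tau omega R :: real
  assumes "tau \<noteq> 0" and crossing: "tau * cos omega = omega * sin omega"
    and modulus: "tau^2 + omega^2 = R * tau^2"
  shows "R * (sin omega)^2 = 1"
proof -
  have "tau^2 * (cos omega)^2 = omega^2 * (sin omega)^2"
    using crossing by (metis power_mult_distrib)
  also have "omega^2 = (R - 1) * tau^2"
    using modulus by (simp add: algebra_simps)
  finally have "(cos omega)^2 = (R - 1) * (sin omega)^2"
    using \<open>tau \<noteq> 0\<close> by simp
  then show ?thesis
    by (simp add: cos_squared_eq algebra_simps)
qed

lemma arcsin_abs_sin_le: "arcsin \<bar>sin x\<bar> \<le> \<bar>x\<bar>"
proof (cases "\<bar>x\<bar> \<le> pi/2")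
  case True
  then have "\<bar>sin x\<bar> = sin \<bar>x\<bar>"
    using sin_ge_zero[of x] sin_ge_zero[of "- x"] by (cases "0 \<le> x") auto
  with True show ?thesis
    by (simp add: arcsin_sin)
next
  case False
  have "arcsin \<bar>sin x\<bar> \<le> pi/2"
    by (rule arcsin_ubound) (use abs_sin_le_one[of x] in auto)
  with False show ?thesis
    by linarith
qed

lemma crossing_modulus_gt_one:
  fixes tau omega R :: real
  assumes "0 < tau" and crossing: "tau * cos omega = omega * sin omega"
    and modulus: "tau^2 + omega^2 = R * tau^2"
  shows "1 < R"
proof -
  have "omega \<noteq> 0"
    using crossing \<open>0 < tau\<close> by auto
  moreover have "(R - 1) * tau^2 = omega^2"
    using modulus by (simp add: algebra_simps)
  ultimately have "0 < (R - 1) * tau^2"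
    by simp
  then show ?thesis
    by (simp add: zero_less_mult_iff)
qed

lemma crossing_frequency_lower_bound:
  fixes tau omega R S :: real
  assumes "0 < tau" and crossing: "tau * cos omega = omega * sin omega"
    and modulus: "tau^2 + omega^2 = R * tau^2" and "R \<le> S"
  shows "arcsin (sqrt (1 / S)) \<le> \<bar>omega\<bar>"
proof -
  have "1 < S"
    using crossing_modulus_gt_one[OF assms(1-3)] \<open>R \<le> S\<close> by simp
  have "R * (sin omega)^2 = 1"
    using \<open>0 < tau\<close> by (intro crossing_sin_squared[OF _ crossing modulus]) simp
  moreover have "R * (sin omega)^2 \<le> S * (sin omega)^2"
    using \<open>R \<le> S\<close> by (simp add: mult_right_mono)
  ultimately have "1 / S \<le> \<bar>sin omega\<bar>^2"
    using \<open>1 < S\<close> by (simp add: field_simps)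
  then have "sqrt (1 / S) \<le> \<bar>sin omega\<bar>"
    by (simp add: real_le_lsqrt)
  then have "arcsin (sqrt (1 / S)) \<le> arcsin \<bar>sin omega\<bar>"
    using \<open>1 < S\<close> abs_sin_le_one[of omega]
    by (intro arcsin_le_arcsin) (auto intro: order_trans[OF _ real_sqrt_ge_zero])
  also have "\<dots> \<le> \<bar>omega\<bar>"
    by (rule arcsin_abs_sin_le)
  finally show ?thesis .
qed

lemma crossing_delay_lower_bound:
  fixes tau omega R S :: real
  assumes "0 < tau" and crossing: "tau * cos omega = omega * sin omega"
    and modulus: "tau^2 + omega^2 = R * tau^2" and "R \<le> S"
  shows "arcsin (sqrt (1 / S)) * sqrt (1 / (S - 1)) \<le> tau"
proof -
  have "1 < R"
    by (rule crossing_modulus_gt_one[OF assms(1-3)])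
  have "sqrt (1 / (S - 1)) \<le> sqrt (1 / (R - 1))"
    using \<open>1 < R\<close> \<open>R \<le> S\<close> by (simp add: frac_le)
  with crossing_frequency_lower_bound[OF assms]
  have "arcsin (sqrt (1 / S)) * sqrt (1 / (S - 1)) \<le> \<bar>omega\<bar> * sqrt (1 / (R - 1))"
    using \<open>1 < R\<close> \<open>R \<le> S\<close> by (intro mult_mono) auto
  also have "\<dots> = sqrt (omega^2 * (1 / (R - 1)))"
    by (simp only: real_sqrt_mult real_sqrt_abs)
  also have "omega^2 * (1 / (R - 1)) = tau^2"
    using modulus \<open>1 < R\<close> by (simp add: field_simps)
  finally show ?thesis
    using \<open>0 < tau\<close> by simp
qed

lemma tan_arcsin_sqrt_inverse:
  fixes S :: real
  assumes "1 < S"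
  shows "tan (arcsin (sqrt (1 / S))) = sqrt (1 / (S - 1))"
proof -
  have "- 1 \<le> sqrt (1 / S)" and "sqrt (1 / S) \<le> 1"
    using assms by (auto intro: order_trans[OF _ real_sqrt_ge_zero])
  then have "tan (arcsin (sqrt (1 / S))) = sqrt (1 / S) / sqrt (1 - 1 / S)"
    using assms by (simp add: tan_def cos_arcsin)
  also have "\<dots> = sqrt ((1 / S) / (1 - 1 / S))"
    by (simp only: real_sqrt_divide)
  also have "(1 / S) / (1 - 1 / S) = 1 / (S - 1)"
    using assms by (simp add: field_simps)
  finally show ?thesis .
qed

lemma crossing_delay_attained:
  fixes S :: real
  assumes "1 < S"
  defines "omega0 \<equiv> arcsin (sqrt (1 / S))"
  defines "tau0 \<equiv> omega0 * sqrt (1 / (S - 1))"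
  shows "0 < tau0" and "tau0 * cos omega0 = omega0 * sin omega0"
    and "tau0^2 + omega0^2 = S * tau0^2"
proof -
  have "0 < omega0"
    unfolding omega0_def using assms arcsin_less_arcsin[of 0 "sqrt (1 / S)"] by simp
  then show "0 < tau0"
    unfolding tau0_def using assms by simp
  have "cos omega0 \<noteq> 0"
    unfolding omega0_def using assms
    by (intro cos_arcsin_nonzero) (auto intro: less_le_trans[OF _ real_sqrt_ge_zero])
  then show "tau0 * cos omega0 = omega0 * sin omega0"
    unfolding tau0_def omega0_def tan_arcsin_sqrt_inverse[OF \<open>1 < S\<close>, symmetric]
    by (simp add: tan_def)
  have "tau0^2 = omega0^2 / (S - 1)"
    unfolding tau0_def using assms by (simp add: power_mult_distrib)
  then show "tau0^2 + omega0^2 = S * tau0^2"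
    using assms by (simp add: field_simps)
qed

lemma Phi_dirac_imag_root_delay_ge:
  fixes r1 r2 tau omega :: real
  assumes "r1 + r2 = alpha" and "r1 * r2 = beta" and "r1 \<le> r2" and "r2 < 1"
    and "0 < tau" and root: "Phi H_dirac alpha beta tau (\<i> * of_real omega) = 0"
  shows "arcsin (sqrt (1 / - r1)) * sqrt (1 / (- r1 - 1)) \<le> tau"
proof -
  have "r1 < 1"
    using \<open>r1 \<le> r2\<close> \<open>r2 < 1\<close> by simp
  obtain R where "tau * cos omega = omega * sin omega" and "tau^2 + omega^2 = R * tau^2"
    and "R \<le> - r1"
    using root \<open>r1 \<le> r2\<close>
    unfolding Phi_dirac_imag_root_iff[OF assms(1,2) \<open>r1 < 1\<close> \<open>r2 < 1\<close> \<open>0 < tau\<close>]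
    by (metis minus_mult_left neg_le_iff_le order_refl)
  with \<open>0 < tau\<close> show ?thesis
    by (rule crossing_delay_lower_bound)
qed

lemma Phi_dirac_imag_root_at_critical_delay:
  fixes r1 r2 :: real
  assumes "r1 + r2 = alpha" and "r1 * r2 = beta" and "r1 < -1" and "r2 < 1"
  defines "omega0 \<equiv> arcsin (sqrt (1 / - r1))"
  defines "tau0 \<equiv> omega0 * sqrt (1 / (- r1 - 1))"
  shows "Phi H_dirac alpha beta tau0 (\<i> * of_real omega0) = 0"
proof -
  have "1 < - r1"
    using \<open>r1 < -1\<close> by simp
  note attained = crossing_delay_attained[OF this, folded omega0_def, folded tau0_def]
  have "r1 < 1"
    using \<open>r1 < -1\<close> by simp
  show ?thesis
    unfolding Phi_dirac_imag_root_iff[OF assms(1,2) \<open>r1 < 1\<close> \<open>r2 < 1\<close> attained(1)]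
    using attained(2,3) by simp
qed

theorem mainTheorem8:
  fixes alpha beta :: real
  assumes "alpha < 2"
    and "alpha - 1 < beta" and "beta < alpha ^ 2 / 4"
    and "(alpha - sqrt (alpha ^ 2 - 4 * beta)) / 2 < -1"
  defines "s \<equiv> \<bar>alpha - sqrt (alpha ^ 2 - 4 * beta)\<bar>"
  defines "omega0 \<equiv> arcsin (sqrt (2 / s))"
  defines "tau0 \<equiv> arcsin (sqrt (2 / s)) * sqrt (2 / (s - 2))"
  shows "s > 2
    \<and> (\<forall>tau omega. tau > 0 \<longrightarrow> omega > 0 \<longrightarrow>
           Phi H_dirac alpha beta tau (\<i> * of_real omega) = 0 \<longrightarrow>
           tan omega > 0 \<and> tau = omega * tan omega)
    \<and> tau0 = omega0 * tan omega0
    \<and> Phi H_dirac alpha beta tau0 (\<i> * of_real omega0) = 0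
    \<and> tau0 > 0
    \<and> (\<forall>tau omega. 0 < tau \<longrightarrow> tau < tau0 \<longrightarrow>
           Phi H_dirac alpha beta tau (\<i> * of_real omega) \<noteq> 0)"
proof -
  define r1 where "r1 = (alpha - sqrt (alpha^2 - 4 * beta)) / 2"
  define r2 where "r2 = (alpha + sqrt (alpha^2 - 4 * beta)) / 2"
  note roots = quadratic_roots_below_one[OF assms(2-4), folded r1_def r2_def]
  have "s = - 2 * r1"
    using roots(3) unfolding s_def r1_def by (simp add: field_simps)
  then have omega0_eq: "omega0 = arcsin (sqrt (1 / - r1))"
    and tau0_eq: "tau0 = omega0 * sqrt (1 / (- r1 - 1))"
    unfolding omega0_def tau0_def using roots(3) by (simp_all add: field_simps)
  have "1 < - r1" and "r1 < 1"
    using roots(3) by simp_all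
  have "tau0 = omega0 * tan omega0"
    unfolding tau0_eq omega0_eq tan_arcsin_sqrt_inverse[OF \<open>1 < - r1\<close>] ..
  moreover have "0 < tau0"
    using crossing_delay_attained(1)[OF \<open>1 < - r1\<close>] unfolding tau0_eq omega0_eq .
  moreover have "Phi H_dirac alpha beta tau0 (\<i> * of_real omega0) = 0"
    unfolding tau0_eq omega0_eq using roots(1-3,5) by (rule Phi_dirac_imag_root_at_critical_delay)
  moreover have "tau0 \<le> tau"
    if "0 < tau" and "Phi H_dirac alpha beta tau (\<i> * of_real omega) = 0" for tau omega
    unfolding tau0_eq omega0_eq using roots(1,2,4,5) that by (rule Phi_dirac_imag_root_delay_ge)
  moreover have "0 < tan omega \<and> tau = omega * tan omega"
    if "0 < tau" and "0 < omega" and "Phi H_dirac alpha beta tau (\<i> * of_real omega) = 0"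
    for tau omega
    using that(3) unfolding Phi_dirac_imag_root_iff[OF roots(1,2) \<open>r1 < 1\<close> roots(5) that(1)]
    by (intro crossing_delay_eq_tan that(1,2)) blast
  ultimately show ?thesis
    using \<open>s = - 2 * r1\<close> roots(3) by (auto simp: not_le[symmetric])
qed

end
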